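(* Let $k$ be a field, $Q$ a finite connected quiver without oriented cycles with vertex set $Q_0$ and arrow set $Q_1$, and $Z$ a minimal set of paths of length at least two. Then $$\dim_k H^1\big(kQ/\langle Z\rangle,\,kQ/\langle Z\rangle\big)\geq 1-|Q_0|+|Q_1|.$$
   Context: $kQ$ is the path algebra of $Q$, $\langle Z\rangle$ is the two-sided ideal generated by $Z$, and $H^1$ denotes first Hochschild cohomology. $Z$ minimal means no path in $Z$ has a strict sub-path belonging to $Z$. *)

theory Defs
  imports Complex_Main "HOL-Library.Function_Algebras"
begin

text \<open>A path is a pair (v, es): a start vertex v and a list of arrows es (es = [] gives the
trivial path e_v).  Paths are composed left to right: p q is p followed by q.\<close>

definition quiver :: "'v set \<Rightarrow> 'e set \<Rightarrow> ('e \<Rightarrow> 'v) \<Rightarrow> ('e \<Rightarrow> 'v) \<Rightarrow> bool" where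
  "quiver Q0 Q1 s t \<longleftrightarrow> (\<forall>a\<in>Q1. s a \<in> Q0 \<and> t a \<in> Q0)"

definition is_path :: "'v set \<Rightarrow> 'e set \<Rightarrow> ('e \<Rightarrow> 'v) \<Rightarrow> ('e \<Rightarrow> 'v) \<Rightarrow> 'v \<times> 'e list \<Rightarrow> bool" where
  "is_path Q0 Q1 s t p \<longleftrightarrow>
     fst p \<in> Q0 \<and> set (snd p) \<subseteq> Q1 \<and>
     (snd p \<noteq> [] \<longrightarrow> s (hd (snd p)) = fst p) \<and>
     (\<forall>i. Suc i < length (snd p) \<longrightarrow> t (snd p ! i) = s (snd p ! Suc i))"

definition paths :: "'v set \<Rightarrow> 'e set \<Rightarrow> ('e \<Rightarrow> 'v) \<Rightarrow> ('e \<Rightarrow> 'v) \<Rightarrow> ('v \<times> 'e list) set" where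
  "paths Q0 Q1 s t = {p. is_path Q0 Q1 s t p}"

definition psource :: "'v \<times> 'e list \<Rightarrow> 'v" where
  "psource p = fst p"

definition ptarget :: "('e \<Rightarrow> 'v) \<Rightarrow> 'v \<times> 'e list \<Rightarrow> 'v" where
  "ptarget t p = (if snd p = [] then fst p else t (last (snd p)))"

definition pcat :: "'v \<times> 'e list \<Rightarrow> 'v \<times> 'e list \<Rightarrow> 'v \<times> 'e list" where
  "pcat p q = (fst p, snd p @ snd q)"

definition connected_quiver :: "'v set \<Rightarrow> 'e set \<Rightarrow> ('e \<Rightarrow> 'v) \<Rightarrow> ('e \<Rightarrow> 'v) \<Rightarrow> bool" where
  "connected_quiver Q0 Q1 s t \<longleftrightarrow> Q0 \<noteq> {} \<and>
     (\<forall>u\<in>Q0. \<forall>v\<in>Q0. (u, v) \<in> ({(s a, t a) | a. a \<in> Q1} \<union> {(t a, s a) | a. a \<in> Q1})\<^sup>*)"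

definition acyclic_quiver :: "'v set \<Rightarrow> 'e set \<Rightarrow> ('e \<Rightarrow> 'v) \<Rightarrow> ('e \<Rightarrow> 'v) \<Rightarrow> bool" where
  "acyclic_quiver Q0 Q1 s t \<longleftrightarrow>
     (\<forall>p\<in>paths Q0 Q1 s t. snd p \<noteq> [] \<longrightarrow> ptarget t p \<noteq> psource p)"

definition minimal_relations ::
  "'v set \<Rightarrow> 'e set \<Rightarrow> ('e \<Rightarrow> 'v) \<Rightarrow> ('e \<Rightarrow> 'v) \<Rightarrow> ('v \<times> 'e list) set \<Rightarrow> bool" where
  "minimal_relations Q0 Q1 s t Z \<longleftrightarrow>
     Z \<subseteq> paths Q0 Q1 s t \<and> (\<forall>z\<in>Z. 2 \<le> length (snd z)) \<and>
     (\<forall>p\<in>Z. \<forall>q\<in>Z. (\<exists>xs ys. snd p = xs @ snd q @ ys) \<longrightarrow> q = p)"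

text \<open>Elements of kQ: k-valued functions on paths supported on the (finite) set of paths.\<close>
definition pathalg :: "('p set) \<Rightarrow> ('p \<Rightarrow> 'k::field) set" where
  "pathalg P = {x. \<forall>p. p \<notin> P \<longrightarrow> x p = 0}"

definition pscale :: "'k::field \<Rightarrow> ('p \<Rightarrow> 'k) \<Rightarrow> ('p \<Rightarrow> 'k)" where
  "pscale c x = (\<lambda>p. c * x p)"

definition pbasis :: "'p \<Rightarrow> ('p \<Rightarrow> 'k::field)" where
  "pbasis p = (\<lambda>q. if q = p then 1 else 0)"

definition pmult :: "'v set \<Rightarrow> 'e set \<Rightarrow> ('e \<Rightarrow> 'v) \<Rightarrow> ('e \<Rightarrow> 'v) \<Rightarrow>
    (('v \<times> 'e list) \<Rightarrow> 'k::field) \<Rightarrow> (('v \<times> 'e list) \<Rightarrow> 'k) \<Rightarrow> (('v \<times> 'e list) \<Rightarrow> 'k)" where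
  "pmult Q0 Q1 s t x y = (\<lambda>p. \<Sum>q\<in>paths Q0 Q1 s t. \<Sum>r\<in>paths Q0 Q1 s t.
      if ptarget t q = psource r \<and> pcat q r = p then x q * y r else 0)"

definition gen_ideal :: "'v set \<Rightarrow> 'e set \<Rightarrow> ('e \<Rightarrow> 'v) \<Rightarrow> ('e \<Rightarrow> 'v) \<Rightarrow>
    ('v \<times> 'e list) set \<Rightarrow> (('v \<times> 'e list) \<Rightarrow> 'k::field) set" where
  "gen_ideal Q0 Q1 s t Z = \<Inter>{I. I \<subseteq> pathalg (paths Q0 Q1 s t) \<and> 0 \<in> I \<and>
       (\<forall>x\<in>I. \<forall>y\<in>I. x + y \<in> I) \<and> (\<forall>c. \<forall>x\<in>I. pscale c x \<in> I) \<and>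
       pbasis ` Z \<subseteq> I \<and>
       (\<forall>a\<in>pathalg (paths Q0 Q1 s t). \<forall>x\<in>I.
          pmult Q0 Q1 s t a x \<in> I \<and> pmult Q0 Q1 s t x a \<in> I)}"

text \<open>k-linear endomorphisms of A = kQ/I are represented by their lifts: k-linear maps
F : kQ \<rightarrow> kQ with F(I) \<subseteq> I (extended by 0 outside kQ).  Every endomorphism of A lifts,
and two lifts induce the same map of A iff their difference maps kQ into I.\<close>
definition lift_end :: "'v set \<Rightarrow> 'e set \<Rightarrow> ('e \<Rightarrow> 'v) \<Rightarrow> ('e \<Rightarrow> 'v) \<Rightarrow>
    ('v \<times> 'e list) set \<Rightarrow> ((('v \<times> 'e list) \<Rightarrow> 'k::field) \<Rightarrow> (('v \<times> 'e list) \<Rightarrow> 'k)) set" where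
  "lift_end Q0 Q1 s t Z = {F.
      (\<forall>x\<in>pathalg (paths Q0 Q1 s t). F x \<in> pathalg (paths Q0 Q1 s t)) \<and>
      (\<forall>x. x \<notin> pathalg (paths Q0 Q1 s t) \<longrightarrow> F x = 0) \<and>
      (\<forall>x\<in>pathalg (paths Q0 Q1 s t). \<forall>y\<in>pathalg (paths Q0 Q1 s t). F (x + y) = F x + F y) \<and>
      (\<forall>c. \<forall>x\<in>pathalg (paths Q0 Q1 s t). F (pscale c x) = pscale c (F x)) \<and>
      (\<forall>x\<in>gen_ideal Q0 Q1 s t Z. F x \<in> gen_ideal Q0 Q1 s t Z)}"

text \<open>Lifts of derivations of A: Leibniz rule holds modulo I.\<close>
definition lift_der :: "'v set \<Rightarrow> 'e set \<Rightarrow> ('e \<Rightarrow> 'v) \<Rightarrow> ('e \<Rightarrow> 'v) \<Rightarrow>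
    ('v \<times> 'e list) set \<Rightarrow> ((('v \<times> 'e list) \<Rightarrow> 'k::field) \<Rightarrow> (('v \<times> 'e list) \<Rightarrow> 'k)) set" where
  "lift_der Q0 Q1 s t Z = {F \<in> lift_end Q0 Q1 s t Z.
      \<forall>x\<in>pathalg (paths Q0 Q1 s t). \<forall>y\<in>pathalg (paths Q0 Q1 s t).
        F (pmult Q0 Q1 s t x y) - (pmult Q0 Q1 s t x (F y) + pmult Q0 Q1 s t (F x) y)
          \<in> gen_ideal Q0 Q1 s t Z}"

text \<open>Lifts of inner derivations of A: F x \<equiv> a x - x a modulo I for some a.
(This includes all lifts of the zero map, i.e. F with F(kQ) \<subseteq> I.)\<close>
definition lift_inn :: "'v set \<Rightarrow> 'e set \<Rightarrow> ('e \<Rightarrow> 'v) \<Rightarrow> ('e \<Rightarrow> 'v) \<Rightarrow>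
    ('v \<times> 'e list) set \<Rightarrow> ((('v \<times> 'e list) \<Rightarrow> 'k::field) \<Rightarrow> (('v \<times> 'e list) \<Rightarrow> 'k)) set" where
  "lift_inn Q0 Q1 s t Z = {F \<in> lift_end Q0 Q1 s t Z.
      \<exists>a\<in>pathalg (paths Q0 Q1 s t). \<forall>x\<in>pathalg (paths Q0 Q1 s t).
        F x - (pmult Q0 Q1 s t a x - pmult Q0 Q1 s t x a) \<in> gen_ideal Q0 Q1 s t Z}"

definition escale :: "'k::field \<Rightarrow> (('p \<Rightarrow> 'k) \<Rightarrow> ('p \<Rightarrow> 'k)) \<Rightarrow> (('p \<Rightarrow> 'k) \<Rightarrow> ('p \<Rightarrow> 'k))" where
  "escale c F = (\<lambda>x p. c * F x p)"

text \<open>dim_k HH^1(A,A) = dim_k Der(A)/Inn(A) = dim lift_der - dim lift_inn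
(lift_inn is a subspace of lift_der, both finite dimensional, and
Der(A)/Inn(A) \<cong> lift_der/lift_inn).\<close>
definition dim_HH1 :: "'v set \<Rightarrow> 'e set \<Rightarrow> ('e \<Rightarrow> 'v) \<Rightarrow> ('e \<Rightarrow> 'v) \<Rightarrow>
    ('v \<times> 'e list) set \<Rightarrow> 'k::field itself \<Rightarrow> nat" where
  "dim_HH1 Q0 Q1 s t Z (TYPE('k)) =
     vector_space.dim (escale :: 'k \<Rightarrow> _) (lift_der Q0 Q1 s t Z :: ((('v \<times> 'e list) \<Rightarrow> 'k) \<Rightarrow> _) set)
     - vector_space.dim (escale :: 'k \<Rightarrow> _) (lift_inn Q0 Q1 s t Z :: ((('v \<times> 'e list) \<Rightarrow> 'k) \<Rightarrow> _) set)"

end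

theory Submission
  imports Defs
begin

(* A weight w on the arrows defines a derivation of kQ multiplying every path by the
   total weight of its arrows. The relations are paths, so it preserves <Z> and descends
   to A = kQ/<Z>. Taking the coefficient of the arrow a in the image of a gives a linear
   map from (lifts of) derivations to functions on Q1 that attains every weight, while on
   an inner derivation [x, -] it gives a |-> x(s a) - x(t a) for a function x on Q0, a
   space of dimension at most |Q0| - 1. Hence dim Der A - dim Inn A >= |Q1| - |Q0| + 1.
   Acyclicity only makes kQ finite dimensional. *)

lemma pcat_in_paths:
  assumes q: "q \<in> paths Q0 Q1 s t" and r: "r \<in> paths Q0 Q1 s t"
    and qr: "ptarget t q = psource r"
  shows "pcat q r \<in> paths Q0 Q1 s t"
proof -
  obtain v es where q_eq: "q = (v, es)" by fastforce
  obtain w fs where r_eq: "r = (w, fs)" by fastforce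
  have q': "v \<in> Q0" "set es \<subseteq> Q1" "es \<noteq> [] \<Longrightarrow> s (hd es) = v"
    "\<And>i. Suc i < length es \<Longrightarrow> t (es ! i) = s (es ! Suc i)"
    using q by (auto simp: q_eq paths_def is_path_def)
  have r': "set fs \<subseteq> Q1" "fs \<noteq> [] \<Longrightarrow> s (hd fs) = w"
    "\<And>i. Suc i < length fs \<Longrightarrow> t (fs ! i) = s (fs ! Suc i)"
    using r by (auto simp: r_eq paths_def is_path_def)
  have link: "es \<noteq> [] \<Longrightarrow> fs \<noteq> [] \<Longrightarrow> t (last es) = s (hd fs)"
    and join: "es = [] \<Longrightarrow> v = w"
    using qr r'(2) by (auto simp: q_eq r_eq ptarget_def psource_def)
  have "t ((es @ fs) ! i) = s ((es @ fs) ! Suc i)" if i: "Suc i < length (es @ fs)" for i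
  proof (cases "Suc i < length es")
    case True then show ?thesis using q'(4) by (simp add: nth_append)
  next
    case False
    show ?thesis
    proof (cases "i < length es")
      case True
      then have "i = length es - 1" "es \<noteq> []" "fs \<noteq> []" using False i by auto
      then show ?thesis using link True False by (simp add: nth_append last_conv_nth hd_conv_nth)
    next
      case False
      then show ?thesis using r'(3)[of "i - length es"] i by (simp add: nth_append Suc_diff_le)
    qed
  qed
  moreover have "es @ fs \<noteq> [] \<Longrightarrow> s (hd (es @ fs)) = v"
    using q'(3) r'(2) join by (cases es) auto
  ultimately show ?thesis
    using q' r' by (simp add: q_eq r_eq pcat_def paths_def is_path_def)
qed

lemma psource_pcat [simp]: "psource (pcat q r) = psource q"
  by (simp add: psource_def pcat_def)

lemma ptarget_pcat: "ptarget t q = psource r \<Longrightarrow> ptarget t (pcat q r) = ptarget t r"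
  by (auto simp: ptarget_def pcat_def psource_def)

lemma pcat_assoc: "pcat (pcat q r) u = pcat q (pcat r u)"
  by (simp add: pcat_def)

definition pvertex :: "('e \<Rightarrow> 'v) \<Rightarrow> 'v \<times> 'e list \<Rightarrow> nat \<Rightarrow> 'v" where
  "pvertex t p i = (if i = 0 then fst p else t (snd p ! (i - 1)))"

lemma pvertex_eq_source:
  assumes "p \<in> paths Q0 Q1 s t" "i < length (snd p)"
  shows "pvertex t p i = s (snd p ! i)"
  using assms by (cases i) (auto simp: pvertex_def paths_def is_path_def hd_conv_nth)

lemma pvertex_in_vertices:
  assumes "quiver Q0 Q1 s t" "p \<in> paths Q0 Q1 s t" "i \<le> length (snd p)"
  shows "pvertex t p i \<in> Q0"
proof -
  have "i > 0 \<Longrightarrow> snd p ! (i - 1) \<in> Q1"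
    using assms(2,3) by (auto simp: paths_def is_path_def)
  then show ?thesis using assms(1,2) by (auto simp: pvertex_def paths_def is_path_def quiver_def)
qed

lemma subpath_in_paths:
  assumes quiv: "quiver Q0 Q1 s t" and p: "p \<in> paths Q0 Q1 s t"
    and ij: "i \<le> j" "j \<le> length (snd p)"
  shows "(pvertex t p i, take (j - i) (drop i (snd p))) \<in> paths Q0 Q1 s t"
proof -
  have "set (take (j - i) (drop i (snd p))) \<subseteq> Q1"
    using p set_take_subset set_drop_subset by (fastforce simp: paths_def is_path_def)
  then show ?thesis
    using pvertex_in_vertices[OF quiv p] pvertex_eq_source[OF p] p ij
    by (auto simp: paths_def is_path_def hd_conv_nth)
qed

lemma ptarget_subpath:
  assumes "i < j" "j \<le> length (snd p)"
  shows "ptarget t (pvertex t p i, take (j - i) (drop i (snd p))) = pvertex t p j"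
  using assms by (auto simp: ptarget_def pvertex_def last_conv_nth)

locale finite_acyclic_quiver =
  fixes Q0 :: "'v set" and Q1 :: "'e set" and s t :: "'e \<Rightarrow> 'v"
  assumes finite_vertices: "finite Q0" and finite_arrows: "finite Q1"
    and quiver: "quiver Q0 Q1 s t"
    and acyclic: "acyclic_quiver Q0 Q1 s t"
begin

abbreviation "P \<equiv> paths Q0 Q1 s t"

lemma inj_on_pvertex:
  assumes p: "p \<in> P"
  shows "inj_on (pvertex t p) {0..length (snd p)}"
proof (rule inj_onI, rule ccontr)
  have no_return: "pvertex t p i \<noteq> pvertex t p j" if "i < j" "j \<le> length (snd p)" for i j
    using acyclic subpath_in_paths[OF quiver p, of i j] ptarget_subpath[of i j p t] that
    by (auto simp: acyclic_quiver_def psource_def)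
  fix i j assume "i \<in> {0..length (snd p)}" "j \<in> {0..length (snd p)}"
    "pvertex t p i = pvertex t p j" "i \<noteq> j"
  then show False using no_return[of i j] no_return[of j i] by (auto simp: neq_iff)
qed

lemma path_length_less_card:
  assumes p: "p \<in> P"
  shows "length (snd p) < card Q0"
proof -
  have "card (pvertex t p ` {0..length (snd p)}) \<le> card Q0"
    using pvertex_in_vertices[OF quiver p] by (intro card_mono finite_vertices) auto
  then show ?thesis using card_image[OF inj_on_pvertex[OF p]] by simp
qed

lemma finite_paths: "finite P"
proof (rule finite_subset)
  show "P \<subseteq> Q0 \<times> {es. set es \<subseteq> Q1 \<and> length es \<le> card Q0}"
    using path_length_less_card by (force simp: paths_def is_path_def)
  show "finite (Q0 \<times> {es. set es \<subseteq> Q1 \<and> length es \<le> card Q0})"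
    using finite_vertices finite_arrows finite_lists_length_le by blast
qed

end

section \<open>The path algebra\<close>

lemma sum_apply: "sum f A x = (\<Sum>a\<in>A. f a x)"
  by (induct A rule: infinite_finite_induct) auto

lemma pathalg_add: "x \<in> pathalg P \<Longrightarrow> y \<in> pathalg P \<Longrightarrow> x + y \<in> pathalg P"
  and pathalg_pscale: "x \<in> pathalg P \<Longrightarrow> pscale c x \<in> pathalg P"
  and pathalg_zero: "0 \<in> pathalg P"
  and pathalg_pbasis: "p \<in> P \<Longrightarrow> pbasis p \<in> pathalg P"
  by (auto simp: pathalg_def pscale_def pbasis_def)

lemma pathalg_sum: "(\<And>a. a \<in> A \<Longrightarrow> g a \<in> pathalg P) \<Longrightarrow> sum g A \<in> pathalg P"
  by (induct A rule: infinite_finite_induct) (auto intro: pathalg_add pathalg_zero)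

lemma pathalg_eq_sum_pbasis:
  assumes "finite P" "x \<in> pathalg P"
  shows "x = (\<Sum>p\<in>P. pscale (x p) (pbasis p))"
proof
  fix r
  have "(\<Sum>p\<in>P. pscale (x p) (pbasis p)) r = (\<Sum>p\<in>P. if r = p then x p else 0)"
    by (simp add: sum_apply pscale_def pbasis_def if_distrib cong: if_cong)
  also have "\<dots> = x r" using assms by (auto simp: pathalg_def)
  finally show "x r = (\<Sum>p\<in>P. pscale (x p) (pbasis p)) r" ..
qed

context finite_acyclic_quiver
begin

abbreviation "A \<equiv> pathalg P"
abbreviation "mult \<equiv> pmult Q0 Q1 s t"

definition factorizations :: "'v \<times> 'e list \<Rightarrow> (('v \<times> 'e list) \<times> ('v \<times> 'e list)) set" where
  "factorizations p = {(q, r). q \<in> P \<and> r \<in> P \<and> ptarget t q = psource r \<and> pcat q r = p}"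

lemma finite_factorizations: "finite (factorizations p)"
  by (rule finite_subset[of _ "P \<times> P"]) (auto simp: factorizations_def finite_paths)

lemma factorizations_length:
  "(q, r) \<in> factorizations p \<Longrightarrow> length (snd q) \<le> length (snd p) \<and> length (snd r) \<le> length (snd p)"
  by (auto simp: factorizations_def pcat_def)

lemma pmult_eq_sum_factorizations: "mult x y p = (\<Sum>(q, r)\<in>factorizations p. x q * y r)"
proof -
  have "mult x y p = (\<Sum>(q, r)\<in>P \<times> P. if ptarget t q = psource r \<and> pcat q r = p then x q * y r else 0)"
    unfolding pmult_def by (simp add: sum.cartesian_product)
  also have "\<dots> = (\<Sum>z\<in>{z\<in>P \<times> P. ptarget t (fst z) = psource (snd z) \<and> pcat (fst z) (snd z) = p}.
      x (fst z) * y (snd z))"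
    by (subst sum.inter_filter) (auto simp: finite_paths intro!: sum.cong split: prod.splits)
  also have "{z\<in>P \<times> P. ptarget t (fst z) = psource (snd z) \<and> pcat (fst z) (snd z) = p} = factorizations p"
    by (auto simp: factorizations_def)
  finally show ?thesis by (simp add: case_prod_beta)
qed

lemma pmult_in_pathalg: "mult x y \<in> A"
  using pcat_in_paths
  by (fastforce simp: pathalg_def pmult_eq_sum_factorizations factorizations_def intro!: sum.neutral)

lemma pmult_assoc: "mult x (mult y z) = mult (mult x y) z"
proof
  fix p
  let ?L = "Sigma (factorizations p) (\<lambda>a. factorizations (snd a))"
  let ?R = "Sigma (factorizations p) (\<lambda>a. factorizations (fst a))"
  have "mult x (mult y z) p = (\<Sum>((q, m), (r, u))\<in>?L. x q * (y r * z u))"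
    by (simp add: pmult_eq_sum_factorizations sum_distrib_left sum.Sigma finite_factorizations case_prod_beta)
  also have "\<dots> = (\<Sum>((m, u), (q, r))\<in>?R. x q * y r * z u)"
  proof -
    have L_to_R: "((pcat q r, u), (q, r)) \<in> ?R \<and> m = pcat r u" if "((q, m), (r, u)) \<in> ?L" for q m r u
    proof -
      have "q \<in> P" "r \<in> P" "u \<in> P" "m = pcat r u" "ptarget t q = psource r"
        "ptarget t r = psource u" "pcat q (pcat r u) = p"
        using that by (auto simp: factorizations_def)
      then show ?thesis by (auto simp: factorizations_def pcat_in_paths ptarget_pcat pcat_assoc)
    qed
    have R_to_L: "((q, pcat r u), (r, u)) \<in> ?L \<and> m = pcat q r" if "((m, u), (q, r)) \<in> ?R" for q m r u
    proof -
      have "q \<in> P" "r \<in> P" "u \<in> P" "m = pcat q r" "ptarget t q = psource r"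
        "ptarget t r = psource u" "pcat (pcat q r) u = p"
        using that by (auto simp: factorizations_def ptarget_pcat)
      then show ?thesis by (auto simp: factorizations_def pcat_in_paths pcat_assoc)
    qed
    show ?thesis
      by (rule sum.reindex_bij_witness[of _ "\<lambda>((m, u), (q, r)). ((q, pcat r u), (r, u))"
                                            "\<lambda>((q, m), (r, u)). ((pcat q r, u), (q, r))"])
        (use L_to_R R_to_L in \<open>auto simp: mult.assoc\<close>)
  qed
  also have "\<dots> = mult (mult x y) z p"
    by (simp add: pmult_eq_sum_factorizations sum_distrib_right sum.Sigma finite_factorizations case_prod_beta)
  finally show "mult x (mult y z) p = mult (mult x y) z p" .
qed

lemma pmult_add_left: "mult (x + y) z = mult x z + mult y z"
  and pmult_add_right: "mult x (y + z) = mult x y + mult x z"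
  and pmult_diff_left: "mult (x - y) z = mult x z - mult y z"
  and pmult_diff_right: "mult x (y - z) = mult x y - mult x z"
  by (simp_all add: fun_eq_iff pmult_eq_sum_factorizations case_prod_beta algebra_simps
      sum.distrib[symmetric] sum_subtractf[symmetric])

end

section \<open>The ideal generated by the relations\<close>

lemma gen_ideal_induct:
  assumes "x \<in> gen_ideal Q0 Q1 s t Z"
    and "J \<subseteq> pathalg (paths Q0 Q1 s t)" and "0 \<in> J"
    and "\<And>x y. x \<in> J \<Longrightarrow> y \<in> J \<Longrightarrow> x + y \<in> J"
    and "\<And>c x. x \<in> J \<Longrightarrow> pscale c x \<in> J"
    and "\<And>z. z \<in> Z \<Longrightarrow> pbasis z \<in> J"
    and "\<And>a x. a \<in> pathalg (paths Q0 Q1 s t) \<Longrightarrow> x \<in> J \<Longrightarrow> pmult Q0 Q1 s t a x \<in> J"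
    and "\<And>a x. a \<in> pathalg (paths Q0 Q1 s t) \<Longrightarrow> x \<in> J \<Longrightarrow> pmult Q0 Q1 s t x a \<in> J"
  shows "x \<in> J"
  using assms(1) unfolding gen_ideal_def
  by (rule InterD) (use assms(2-) in \<open>auto\<close>)

lemma gen_ideal_zero: "0 \<in> gen_ideal Q0 Q1 s t Z"
  and gen_ideal_add: "x \<in> gen_ideal Q0 Q1 s t Z \<Longrightarrow> y \<in> gen_ideal Q0 Q1 s t Z \<Longrightarrow>
    x + y \<in> gen_ideal Q0 Q1 s t Z"
  and gen_ideal_pscale: "x \<in> gen_ideal Q0 Q1 s t Z \<Longrightarrow> pscale c x \<in> gen_ideal Q0 Q1 s t Z"
  and gen_ideal_generator: "z \<in> Z \<Longrightarrow> pbasis z \<in> gen_ideal Q0 Q1 s t Z"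
  and gen_ideal_lmult: "a \<in> pathalg (paths Q0 Q1 s t) \<Longrightarrow> x \<in> gen_ideal Q0 Q1 s t Z \<Longrightarrow>
    pmult Q0 Q1 s t a x \<in> gen_ideal Q0 Q1 s t Z"
  and gen_ideal_rmult: "a \<in> pathalg (paths Q0 Q1 s t) \<Longrightarrow> x \<in> gen_ideal Q0 Q1 s t Z \<Longrightarrow>
    pmult Q0 Q1 s t x a \<in> gen_ideal Q0 Q1 s t Z"
  unfolding gen_ideal_def by (simp_all add: image_subset_iff)

lemma gen_ideal_diff:
  assumes "x \<in> gen_ideal Q0 Q1 s t Z" "y \<in> gen_ideal Q0 Q1 s t Z"
  shows "x - y \<in> gen_ideal Q0 Q1 s t Z"
proof -
  have "x - y = x + pscale (-1) y" by (simp add: fun_eq_iff pscale_def)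
  then show ?thesis by (simp only:) (intro gen_ideal_add gen_ideal_pscale assms)
qed

locale monomial_algebra = finite_acyclic_quiver Q0 Q1 s t
  for Q0 :: "'v set" and Q1 :: "'e set" and s t +
  fixes Z :: "('v \<times> 'e list) set"
  assumes relations_paths: "Z \<subseteq> paths Q0 Q1 s t"
    and relations_length: "z \<in> Z \<Longrightarrow> 2 \<le> length (snd z)"
begin

abbreviation "I \<equiv> gen_ideal Q0 Q1 s t Z"

lemma gen_ideal_subset_pathalg: "x \<in> I \<Longrightarrow> x \<in> A"
  by (erule gen_ideal_induct)
    (use relations_paths in \<open>auto intro: pathalg_add pathalg_pscale pathalg_zero pathalg_pbasis pmult_in_pathalg\<close>)

lemma gen_ideal_vanishes_short:
  fixes x :: "('v \<times> 'e list) \<Rightarrow> 'k::field"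
  assumes "x \<in> I" "length (snd p) \<le> 1"
  shows "x p = 0"
proof -
  let ?J = "{y\<in>A. \<forall>p. length (snd p) \<le> 1 \<longrightarrow> y p = (0 :: 'k)}"
  have pmult_short: "mult a x p = 0" "mult x a p = 0"
    if x: "x \<in> ?J" and p: "length (snd p) \<le> 1" for a x p
  proof -
    have "x q = 0" "x r = 0" if "(q, r) \<in> factorizations p" for q r
      using x p factorizations_length[OF that] by (metis (mono_tags, lifting) CollectD order_trans)+
    then show "mult a x p = 0" "mult x a p = 0"
      unfolding pmult_eq_sum_factorizations by (auto intro!: sum.neutral)
  qed
  have "x \<in> ?J"
    using assms(1)
  proof (rule gen_ideal_induct)
    show "?J \<subseteq> A" by blast
    show "0 \<in> ?J" by (simp add: pathalg_zero)
    show "x + y \<in> ?J" if "x \<in> ?J" "y \<in> ?J" for x y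
      using that by (simp add: pathalg_add)
    show "pscale c x \<in> ?J" if "x \<in> ?J" for c x
      using that pathalg_pscale[of x P c] by (simp add: pscale_def)
    show "pbasis z \<in> ?J" if "z \<in> Z" for z
    proof -
      have "z \<in> P" "2 \<le> length (snd z)" using that relations_paths relations_length by auto
      then show ?thesis using pathalg_pbasis[of z P] by (auto simp: pbasis_def)
    qed
    show "mult a x \<in> ?J" "mult x a \<in> ?J" if "x \<in> ?J" for a x
      using pmult_short[OF that] pmult_in_pathalg by auto
  qed
  then show ?thesis using assms(2) by blast
qed

end

section \<open>Weight derivations\<close>

definition path_weight :: "('e \<Rightarrow> 'k::field) \<Rightarrow> 'v \<times> 'e list \<Rightarrow> 'k" where
  "path_weight w p = sum_list (map w (snd p))"

lemma path_weight_pcat: "path_weight w (pcat q r) = path_weight w q + path_weight w r"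
  by (simp add: path_weight_def pcat_def)

context finite_acyclic_quiver
begin

definition weight_der :: "('e \<Rightarrow> 'k::field) \<Rightarrow> (('v \<times> 'e list) \<Rightarrow> 'k) \<Rightarrow> ('v \<times> 'e list) \<Rightarrow> 'k" where
  "weight_der w x = (if x \<in> A then (\<lambda>p. path_weight w p * x p) else 0)"

lemma weight_der_in_pathalg: "weight_der w x \<in> A"
  by (auto simp: weight_der_def pathalg_def)

lemma weight_der_apply: "x \<in> A \<Longrightarrow> weight_der w x = (\<lambda>p. path_weight w p * x p)"
  by (simp add: weight_der_def)

lemma weight_der_add: "x \<in> A \<Longrightarrow> y \<in> A \<Longrightarrow> weight_der w (x + y) = weight_der w x + weight_der w y"
  by (simp add: weight_der_apply pathalg_add distrib_left fun_eq_iff)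

lemma weight_der_pscale:
  assumes "x \<in> A"
  shows "weight_der w (pscale c x) = pscale c (weight_der w x)"
  unfolding weight_der_apply[OF assms] weight_der_apply[OF pathalg_pscale[OF assms]]
  by (simp add: pscale_def fun_eq_iff mult.left_commute)

lemma weight_der_pbasis:
  assumes "p \<in> P"
  shows "weight_der w (pbasis p) = pscale (path_weight w p) (pbasis p)"
  unfolding weight_der_apply[OF pathalg_pbasis[OF assms]]
  by (simp add: pscale_def fun_eq_iff pbasis_def)

lemma weight_der_leibniz:
  assumes "x \<in> A" "y \<in> A"
  shows "weight_der w (mult x y) = mult x (weight_der w y) + mult (weight_der w x) y"
proof
  fix p
  have "weight_der w (mult x y) p = (\<Sum>(q, r)\<in>factorizations p. path_weight w p * (x q * y r))"
    by (simp add: weight_der_apply pmult_in_pathalg pmult_eq_sum_factorizations sum_distrib_left case_prod_beta)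
  also have "\<dots> = (\<Sum>(q, r)\<in>factorizations p. x q * (path_weight w r * y r) + path_weight w q * x q * y r)"
    by (rule sum.cong) (auto simp: factorizations_def path_weight_pcat algebra_simps)
  also have "\<dots> = (mult x (weight_der w y) + mult (weight_der w x) y) p"
    by (simp add: weight_der_apply assms pmult_eq_sum_factorizations sum.distrib case_prod_beta)
  finally show "weight_der w (mult x y) p = (mult x (weight_der w y) + mult (weight_der w x) y) p" .
qed

end

context monomial_algebra
begin

(* The generators pbasis z are eigenvectors of every weight derivation. *)
lemma weight_der_gen_ideal:
  assumes "x \<in> I"
  shows "weight_der w x \<in> I"
proof -
  let ?J = "{x\<in>I. weight_der w x \<in> I}"
  have "x \<in> ?J"
    using assms
  proof (rule gen_ideal_induct)
    show "?J \<subseteq> A" using gen_ideal_subset_pathalg by blast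
    have "weight_der w 0 = 0" by (simp add: weight_der_apply pathalg_zero fun_eq_iff)
    then show "0 \<in> ?J" by (simp add: gen_ideal_zero)
    show "x + y \<in> ?J" if "x \<in> ?J" "y \<in> ?J" for x y
      using that gen_ideal_subset_pathalg[of x] gen_ideal_subset_pathalg[of y]
      by (simp add: weight_der_add gen_ideal_add)
    show "pscale c x \<in> ?J" if "x \<in> ?J" for c x
      using that gen_ideal_subset_pathalg[of x] by (simp add: weight_der_pscale gen_ideal_pscale)
    show "pbasis z \<in> ?J" if "z \<in> Z" for z
      using that relations_paths by (auto simp: weight_der_pbasis gen_ideal_pscale gen_ideal_generator)
    show "mult a x \<in> ?J" "mult x a \<in> ?J" if a: "a \<in> A" and x: "x \<in> ?J" for a x
      using gen_ideal_subset_pathalg[of x] x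
      by (simp_all add: weight_der_leibniz a gen_ideal_add gen_ideal_lmult gen_ideal_rmult
          weight_der_in_pathalg)
  qed
  then show ?thesis by blast
qed

abbreviation "LD \<equiv> lift_der Q0 Q1 s t Z"
abbreviation "LI \<equiv> lift_inn Q0 Q1 s t Z"

lemma weight_der_lift_der: "weight_der w \<in> LD"
proof -
  have "weight_der w \<in> lift_end Q0 Q1 s t Z"
    unfolding lift_end_def
    by (auto simp: weight_der_in_pathalg weight_der_add weight_der_pscale weight_der_gen_ideal)
      (simp add: weight_der_def)
  then show ?thesis
    by (simp add: lift_der_def weight_der_leibniz gen_ideal_zero)
qed

lemma lift_inn_subset_lift_der: "(LI :: ((('v \<times> 'e list) \<Rightarrow> 'k::field) \<Rightarrow> _) set) \<subseteq> LD"
proof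
  fix F :: "(('v \<times> 'e list) \<Rightarrow> 'k) \<Rightarrow> ('v \<times> 'e list) \<Rightarrow> 'k"
  assume F: "F \<in> LI"
  then obtain a where inner: "\<And>x. x \<in> A \<Longrightarrow> F x - (mult a x - mult x a) \<in> I"
    by (auto simp: lift_inn_def)
  define err where "err x = F x - (mult a x - mult x a)" for x
  have "F (mult x y) - (mult x (F y) + mult (F x) y) \<in> I" if "x \<in> A" "y \<in> A" for x y
  proof -
    have "F (mult x y) - (mult x (F y) + mult (F x) y) = err (mult x y) - mult x (err y) - mult (err x) y"
      by (simp add: err_def pmult_add_left pmult_add_right pmult_diff_left pmult_diff_right
          pmult_assoc algebra_simps)
    also have "\<dots> \<in> I"
      using inner that pmult_in_pathalg
      by (intro gen_ideal_diff gen_ideal_lmult gen_ideal_rmult) (auto simp: err_def)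
    finally show ?thesis .
  qed
  then show "F \<in> LD" using F by (simp add: lift_inn_def lift_der_def)
qed

end

(* Extend a basis of A to one of B: the images of the new vectors together with G span f ` B. *)
lemma (in Vector_Spaces.linear) card_independent_le_dim_diff:
  assumes AB: "A \<subseteq> B" and B: "B \<subseteq> vs1.span E" "finite E"
    and G: "f ` A \<subseteq> vs2.span G" "finite G"
    and C: "vs2.independent C" "C \<subseteq> vs2.span (f ` B)"
  shows "card C \<le> card G + (vs1.dim B - vs1.dim A)"
proof -
  obtain BA where BA: "BA \<subseteq> A" "vs1.independent BA" "A \<subseteq> vs1.span BA" "card BA = vs1.dim A"
    by (rule vs1.basis_exists)
  obtain BB where BB: "BA \<subseteq> BB" "BB \<subseteq> B" "vs1.independent BB" "B \<subseteq> vs1.span BB"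
    using vs1.maximal_independent_subset_extend[of BA B] BA(1,2) AB by blast
  have "finite BB" "card BB = vs1.dim B"
    using vs1.independent_span_bound[OF B(2) BB(3)] BB(2) B(1) vs1.basis_card_eq_dim[OF BB(2,4,3)]
    by auto
  then have "finite BA" and card_BB: "card BB = vs1.dim B" using BB(1) finite_subset by auto
  let ?T = "G \<union> f ` (BB - BA)"
  have "f ` BB \<subseteq> vs2.span ?T"
  proof -
    have "f ` BA \<subseteq> vs2.span G" using BA(1) G(1) by blast
    then show ?thesis using vs2.span_mono[of G ?T] vs2.span_superset[of ?T] by blast
  qed
  moreover have "f ` B \<subseteq> vs2.span (f ` BB)"
    using BB(4) span_image by blast
  ultimately have "vs2.span (f ` B) \<subseteq> vs2.span ?T"
    by (meson vs2.span_minimal vs2.subspace_span order_trans)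
  then have "card C \<le> card ?T"
    using vs2.independent_span_bound[of ?T C] C G(2) \<open>finite BB\<close> by auto
  also have "\<dots> \<le> card G + card (BB - BA)"
    using card_Un_le card_image_le[of "BB - BA" f] \<open>finite BB\<close> by (meson add_left_mono finite_Diff order_trans)
  also have "card (BB - BA) = vs1.dim B - vs1.dim A"
    using card_Diff_subset[OF \<open>finite BA\<close> BB(1)] card_BB BA(4) by simp
  finally show ?thesis .
qed

interpretation map_space: vector_space "escale :: 'k::field \<Rightarrow> (('p \<Rightarrow> 'k) \<Rightarrow> ('p \<Rightarrow> 'k)) \<Rightarrow> _"
  by unfold_locales (auto simp: escale_def fun_eq_iff algebra_simps)

definition fun_scale :: "'k::field \<Rightarrow> ('a \<Rightarrow> 'k) \<Rightarrow> 'a \<Rightarrow> 'k" where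
  "fun_scale c f = (\<lambda>x. c * f x)"

interpretation fun_space: vector_space "fun_scale :: 'k::field \<Rightarrow> ('a \<Rightarrow> 'k) \<Rightarrow> _"
  by unfold_locales (auto simp: fun_scale_def fun_eq_iff algebra_simps)

lemma fun_space_independent_pbasis: "fun_space.independent (pbasis ` S :: ('a \<Rightarrow> 'k::field) set)"
proof (unfold fun_space.independent_explicit_finite_subsets, intro allI impI ballI)
  fix T u v
  assume T: "T \<subseteq> pbasis ` S" "finite T" and sum_zero: "(\<Sum>v\<in>T. fun_scale (u v) v) = (0 :: 'a \<Rightarrow> 'k)"
    and v: "v \<in> T"
  obtain a where "v = pbasis a" using T v by blast
  have "u w * w a = (if w = v then u v else 0)" if w: "w \<in> T" for w
  proof -
    obtain b where "w = pbasis b" using w T(1) by blast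
    moreover have "pbasis b = (pbasis a :: 'a \<Rightarrow> 'k) \<longleftrightarrow> b = a"
      by (auto simp: pbasis_def fun_eq_iff)
    ultimately show ?thesis using \<open>v = pbasis a\<close> by (auto simp: pbasis_def)
  qed
  then have "(\<Sum>w\<in>T. fun_scale (u w) w) a = (\<Sum>w\<in>T. if w = v then u v else 0)"
    by (simp add: sum_apply fun_scale_def)
  then show "u v = 0" using sum_zero v T(2) by simp
qed

lemma lift_endD:
  assumes "F \<in> lift_end Q0 Q1 s t Z"
  shows "x \<in> pathalg (paths Q0 Q1 s t) \<Longrightarrow> F x \<in> pathalg (paths Q0 Q1 s t)"
    and "x \<notin> pathalg (paths Q0 Q1 s t) \<Longrightarrow> F x = 0"
    and "x \<in> pathalg (paths Q0 Q1 s t) \<Longrightarrow> y \<in> pathalg (paths Q0 Q1 s t) \<Longrightarrow> F (x + y) = F x + F y"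
    and "x \<in> pathalg (paths Q0 Q1 s t) \<Longrightarrow> F (pscale c x) = pscale c (F x)"
  using assms by (auto simp: lift_end_def)

context finite_acyclic_quiver
begin

definition matrix_unit ::
  "'v \<times> 'e list \<Rightarrow> 'v \<times> 'e list \<Rightarrow> (('v \<times> 'e list) \<Rightarrow> 'k::field) \<Rightarrow> ('v \<times> 'e list) \<Rightarrow> 'k" where
  "matrix_unit p q = (\<lambda>x. if x \<in> A then pscale (x p) (pbasis q) else 0)"

lemma lift_end_sum:
  assumes F: "F \<in> lift_end Q0 Q1 s t Z" and "finite S" and "\<And>a. a \<in> S \<Longrightarrow> g a \<in> A"
  shows "F (sum g S) = (\<Sum>a\<in>S. F (g a))"
  using assms(2,3)
proof (induction S rule: finite_induct)
  case empty
  have "F (0 + 0) = F 0 + F 0" by (rule lift_endD(3)[OF F pathalg_zero pathalg_zero])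
  then have "F 0 = 0" by simp
  then show ?case by (simp only: sum.empty)
next
  case (insert a S)
  have IH: "F (sum g S) = (\<Sum>a\<in>S. F (g a))" using insert.IH insert.prems by simp
  have "F (sum g (insert a S)) = F (g a + sum g S)" by (simp only: sum.insert[OF insert.hyps])
  also have "\<dots> = F (g a) + F (sum g S)"
    using insert.prems by (intro lift_endD(3)[OF F] pathalg_sum) auto
  finally show ?case by (simp only: sum.insert[OF insert.hyps] IH)
qed

lemma lift_end_expansion:
  assumes F: "F \<in> lift_end Q0 Q1 s t Z" and x: "x \<in> A"
  shows "F x = (\<Sum>p\<in>P. pscale (x p) (F (pbasis p)))"
proof -
  have "F x = (\<Sum>p\<in>P. F (pscale (x p) (pbasis p)))"
    by (subst pathalg_eq_sum_pbasis[OF finite_paths x])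
      (simp add: lift_end_sum[OF F finite_paths] pathalg_pscale pathalg_pbasis)
  also have "\<dots> = (\<Sum>p\<in>P. pscale (x p) (F (pbasis p)))"
    by (intro sum.cong refl lift_endD(4)[OF F] pathalg_pbasis)
  finally show ?thesis .
qed

lemma lift_end_in_span:
  assumes F: "F \<in> lift_end Q0 Q1 s t Z"
  shows "F \<in> map_space.span ((\<lambda>(p, q). matrix_unit p q) ` (P \<times> P))"
proof -
  have "F = (\<Sum>(p, q)\<in>P \<times> P. escale (F (pbasis p) q) (matrix_unit p q))"
  proof (intro ext)
    fix x r
    show "F x r = (\<Sum>(p, q)\<in>P \<times> P. escale (F (pbasis p) q) (matrix_unit p q)) x r"
    proof (cases "x \<in> A")
      case False
      then show ?thesis
        by (simp add: lift_endD(2)[OF F] sum_apply escale_def matrix_unit_def case_prod_beta)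
    next
      case True
      have column: "F (pbasis p) r = (\<Sum>q\<in>P. F (pbasis p) q * pbasis q r)" if "p \<in> P" for p
        using fun_cong[OF pathalg_eq_sum_pbasis[OF finite_paths lift_endD(1)[OF F pathalg_pbasis[OF that]]], of r]
        by (simp add: sum_apply pscale_def)
      have "(\<Sum>(p, q)\<in>P \<times> P. escale (F (pbasis p) q) (matrix_unit p q)) x r
          = (\<Sum>p\<in>P. x p * (\<Sum>q\<in>P. F (pbasis p) q * pbasis q r))"
        by (simp add: sum_apply escale_def matrix_unit_def True pscale_def sum.cartesian_product
            case_prod_beta sum_distrib_left mult.left_commute)
      also have "\<dots> = F x r"
        by (simp add: lift_end_expansion[OF F True] sum_apply pscale_def column)
      finally show ?thesis ..
    qed
  qed
  also have "\<dots> \<in> map_space.span ((\<lambda>(p, q). matrix_unit p q) ` (P \<times> P))"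
    by (intro map_space.span_sum) (auto split: prod.splits intro!: map_space.span_scale[OF map_space.span_base])
  finally show ?thesis .
qed

end

section \<open>Coefficients at arrows\<close>

context finite_acyclic_quiver
begin

definition arrow_path :: "'e \<Rightarrow> 'v \<times> 'e list" where
  "arrow_path \<alpha> = (s \<alpha>, [\<alpha>])"

lemma arrow_path_in_paths: "\<alpha> \<in> Q1 \<Longrightarrow> arrow_path \<alpha> \<in> P"
  using quiver by (simp add: arrow_path_def paths_def is_path_def quiver_def)

lemma factorizations_arrow_path:
  assumes "\<alpha> \<in> Q1"
  shows "factorizations (arrow_path \<alpha>) = {((s \<alpha>, []), arrow_path \<alpha>), (arrow_path \<alpha>, (t \<alpha>, []))}"
proof (intro set_eqI iffI)
  fix z assume z: "z \<in> factorizations (arrow_path \<alpha>)"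
  obtain v es w fs where z_eq: "z = ((v, es), (w, fs))" by (metis prod.collapse)
  from z have "v = s \<alpha>" "es @ fs = [\<alpha>]" and link: "ptarget t (v, es) = w"
    by (auto simp: z_eq factorizations_def pcat_def arrow_path_def psource_def)
  then have "(es = [] \<and> fs = [\<alpha>]) \<or> (es = [\<alpha>] \<and> fs = [])"
    by (auto simp: append_eq_Cons_conv)
  then show "z \<in> {((s \<alpha>, []), arrow_path \<alpha>), (arrow_path \<alpha>, (t \<alpha>, []))}"
    using \<open>v = s \<alpha>\<close> link by (auto simp: z_eq arrow_path_def ptarget_def)
next
  fix z assume "z \<in> {((s \<alpha>, []), arrow_path \<alpha>), (arrow_path \<alpha>, (t \<alpha>, []))}"
  then show "z \<in> factorizations (arrow_path \<alpha>)"
    using assms arrow_path_in_paths quiver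
    by (auto simp: factorizations_def arrow_path_def ptarget_def psource_def pcat_def
        paths_def is_path_def quiver_def)
qed

lemma pmult_arrow_path_left: "\<alpha> \<in> Q1 \<Longrightarrow> mult a (pbasis (arrow_path \<alpha>)) (arrow_path \<alpha>) = a (s \<alpha>, [])"
  and pmult_arrow_path_right: "\<alpha> \<in> Q1 \<Longrightarrow> mult (pbasis (arrow_path \<alpha>)) a (arrow_path \<alpha>) = a (t \<alpha>, [])"
  unfolding pmult_eq_sum_factorizations factorizations_arrow_path
  by (subst sum.insert; simp add: pbasis_def arrow_path_def)+

lemma weight_der_arrow_path:
  assumes "\<alpha> \<in> Q1"
  shows "weight_der w (pbasis (arrow_path \<alpha>)) (arrow_path \<alpha>) = w \<alpha>"
  unfolding weight_der_pbasis[OF arrow_path_in_paths[OF assms]]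
  by (simp add: pscale_def pbasis_def path_weight_def arrow_path_def)

definition arrow_coeff :: "((('v \<times> 'e list) \<Rightarrow> 'k::field) \<Rightarrow> ('v \<times> 'e list) \<Rightarrow> 'k) \<Rightarrow> 'e \<Rightarrow> 'k" where
  "arrow_coeff F \<alpha> = (if \<alpha> \<in> Q1 then F (pbasis (arrow_path \<alpha>)) (arrow_path \<alpha>) else 0)"

lemma linear_arrow_coeff: "Vector_Spaces.linear escale fun_scale arrow_coeff"
  by unfold_locales (auto simp: arrow_coeff_def escale_def fun_scale_def fun_eq_iff)

lemma arrow_coeff_weight_der: "\<alpha> \<in> Q1 \<Longrightarrow> arrow_coeff (weight_der (pbasis \<alpha>)) = pbasis \<alpha>"
  by (simp add: arrow_coeff_def fun_eq_iff weight_der_arrow_path) (auto simp: pbasis_def)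

definition incidence :: "'v \<Rightarrow> 'e \<Rightarrow> 'k::field" where
  "incidence v \<alpha> = (if \<alpha> \<in> Q1 then of_bool (s \<alpha> = v) - of_bool (t \<alpha> = v) else 0)"

end

context monomial_algebra
begin

lemma lift_inn_arrow_path_coboundary:
  fixes F :: "(('v \<times> 'e list) \<Rightarrow> 'k::field) \<Rightarrow> ('v \<times> 'e list) \<Rightarrow> 'k"
  assumes "F \<in> LI"
  obtains \<mu> :: "'v \<Rightarrow> 'k"
  where "\<And>\<alpha>. \<alpha> \<in> Q1 \<Longrightarrow> F (pbasis (arrow_path \<alpha>)) (arrow_path \<alpha>) = \<mu> (s \<alpha>) - \<mu> (t \<alpha>)"
proof -
  from assms obtain a where inner: "\<And>x. x \<in> A \<Longrightarrow> F x - (mult a x - mult x a) \<in> I"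
    by (auto simp: lift_inn_def)
  have "F (pbasis (arrow_path \<alpha>)) (arrow_path \<alpha>) = a (s \<alpha>, []) - a (t \<alpha>, [])" if \<alpha>: "\<alpha> \<in> Q1" for \<alpha>
  proof -
    let ?e = "pbasis (arrow_path \<alpha>)"
    have "(F ?e - (mult a ?e - mult ?e a)) (arrow_path \<alpha>) = 0"
      using inner[OF pathalg_pbasis[OF arrow_path_in_paths[OF \<alpha>]]]
      by (rule gen_ideal_vanishes_short) (simp add: arrow_path_def)
    then show ?thesis
      using pmult_arrow_path_left[OF \<alpha>, of a] pmult_arrow_path_right[OF \<alpha>, of a] by simp
  qed
  then show ?thesis using that[of "\<lambda>v. a (v, [])"] by simp
qed

lemma arrow_coeff_lift_inn:
  fixes F :: "(('v \<times> 'e list) \<Rightarrow> 'k::field) \<Rightarrow> ('v \<times> 'e list) \<Rightarrow> 'k"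
  assumes F: "F \<in> LI" and v0: "v0 \<in> Q0"
  shows "arrow_coeff F \<in> fun_space.span (incidence ` (Q0 - {v0}))"
proof -
  obtain \<mu> :: "'v \<Rightarrow> 'k"
    where \<mu>: "\<And>\<alpha>. \<alpha> \<in> Q1 \<Longrightarrow> F (pbasis (arrow_path \<alpha>)) (arrow_path \<alpha>) = \<mu> (s \<alpha>) - \<mu> (t \<alpha>)"
    using lift_inn_arrow_path_coboundary[OF F] by blast
  define \<nu> where "\<nu> v = \<mu> v - \<mu> v0" for v
  have point: "(\<Sum>v\<in>Q0 - {v0}. \<nu> v * of_bool (w = v)) = \<nu> w" if "w \<in> Q0" for w
  proof -
    have "(\<Sum>v\<in>Q0 - {v0}. \<nu> v * of_bool (w = v)) = (\<Sum>v\<in>Q0 - {v0}. if v = w then \<nu> w else 0)"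
      by (rule sum.cong) auto
    also have "\<dots> = \<nu> w" using that finite_vertices by (auto simp: \<nu>_def)
    finally show ?thesis .
  qed
  have "arrow_coeff F = (\<Sum>v\<in>Q0 - {v0}. fun_scale (\<nu> v) (incidence v))"
  proof
    fix \<alpha>
    show "arrow_coeff F \<alpha> = (\<Sum>v\<in>Q0 - {v0}. fun_scale (\<nu> v) (incidence v)) \<alpha>"
    proof (cases "\<alpha> \<in> Q1")
      case True
      have "(\<Sum>v\<in>Q0 - {v0}. fun_scale (\<nu> v) (incidence v)) \<alpha>
          = (\<Sum>v\<in>Q0 - {v0}. \<nu> v * of_bool (s \<alpha> = v)) - (\<Sum>v\<in>Q0 - {v0}. \<nu> v * of_bool (t \<alpha> = v))"
        using True by (simp add: sum_apply fun_scale_def incidence_def right_diff_distrib sum_subtractf)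
      also have "\<dots> = arrow_coeff F \<alpha>"
        using True quiver by (simp add: point quiver_def arrow_coeff_def \<mu>) (simp add: \<nu>_def)
      finally show ?thesis ..
    qed (simp add: arrow_coeff_def sum_apply fun_scale_def incidence_def)
  qed
  also have "\<dots> \<in> fun_space.span (incidence ` (Q0 - {v0}))"
    by (intro fun_space.span_sum fun_space.span_scale fun_space.span_base) auto
  finally show ?thesis .
qed


theorem dim_HH1_lower_bound:
  assumes "Q0 \<noteq> {}"
  shows "int (dim_HH1 Q0 Q1 s t Z TYPE('k::field)) \<ge> 1 - int (card Q0) + int (card Q1)"
proof -
  obtain v0 where v0: "v0 \<in> Q0" using assms by blast
  let ?C = "pbasis ` Q1 :: ('e \<Rightarrow> 'k) set"
  let ?G = "incidence ` (Q0 - {v0}) :: ('e \<Rightarrow> 'k) set"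
  let ?LD = "LD :: ((('v \<times> 'e list) \<Rightarrow> 'k) \<Rightarrow> _) set"
  let ?LI = "LI :: ((('v \<times> 'e list) \<Rightarrow> 'k) \<Rightarrow> _) set"
  have "card ?C \<le> card ?G + (map_space.dim ?LD - map_space.dim ?LI)"
  proof (rule linear.card_independent_le_dim_diff[OF linear_arrow_coeff])
    show "?LD \<subseteq> map_space.span ((\<lambda>(p, q). matrix_unit p q) ` (P \<times> P))"
      using lift_end_in_span by (auto simp: lift_der_def)
    show "arrow_coeff ` ?LI \<subseteq> fun_space.span ?G"
      using arrow_coeff_lift_inn v0 by blast
    have "pbasis \<alpha> \<in> arrow_coeff ` ?LD" if "\<alpha> \<in> Q1" for \<alpha>
      using arrow_coeff_weight_der[OF that] weight_der_lift_der[of "pbasis \<alpha>"] by (metis image_eqI)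
    then show "?C \<subseteq> fun_space.span (arrow_coeff ` ?LD)"
      by (auto intro: fun_space.span_base)
  qed (use lift_inn_subset_lift_der finite_paths finite_vertices fun_space_independent_pbasis in auto)
  moreover have "card ?C = card Q1"
    by (rule card_image) (auto simp: inj_on_def pbasis_def fun_eq_iff)
  moreover have "card ?G \<le> card Q0 - 1"
    using card_image_le[of "Q0 - {v0}" incidence] finite_vertices v0 by simp
  moreover have "card Q0 > 0" using v0 finite_vertices card_gt_0_iff by blast
  ultimately show ?thesis unfolding dim_HH1_def by linarith
qed

end

theorem corollary5p2:
  fixes Q0 :: "'v set" and Q1 :: "'e set" and s t :: "'e \<Rightarrow> 'v"
    and Z :: "('v \<times> 'e list) set"
  assumes "finite Q0" and "finite Q1"
    and "quiver Q0 Q1 s t"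
    and "connected_quiver Q0 Q1 s t"
    and "acyclic_quiver Q0 Q1 s t"
    and "minimal_relations Q0 Q1 s t Z"
  shows "int (dim_HH1 Q0 Q1 s t Z TYPE('k::field)) \<ge> 1 - int (card Q0) + int (card Q1)"
proof -
  interpret monomial_algebra Q0 Q1 s t Z
    using assms by unfold_locales (auto simp: minimal_relations_def)
  show ?thesis
    using assms(4) by (intro dim_HH1_lower_bound) (simp add: connected_quiver_def)
qed

end
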